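(* Let $k \geq 3$ be an integer and let $n$ be a $k$-admissible integer such that $n \in \{2k,2k+1\}$. Any non-reducible partial $k$-star design of order $n$ with $u(n,k)$ stars is completable.
   Context: A $k$-star is a copy of $K_{1,k}$; its vertex of degree $k$ is the centre and the others are leaves. A partial $k$-star design of order $n$ is a pair $(V,\mathcal{A})$ where $V$ is a set of $n$ vertices and $\mathcal{A}$ is a set of edge-disjoint $k$-stars that are subgraphs of the complete graph $K_V$; it is completable if there is a set $\mathcal{B}\supseteq\mathcal{A}$ of edge-disjoint $k$-stars in $K_V$ covering all edges of $K_V$. A positive integer $n$ is $k$-admissible if $\binom{n}{2}\equiv 0 \pmod{k}$. Here \[u(n,k)= \begin{cases} 2 \lfloor \frac{n-2}{k} \rfloor-1 & \text{if $n \not \equiv 1\pmod{k}$},\\ \frac{2(n-1)}{k} - 2 & \text{if $n \equiv 1\pmod{k}$.} \end{cases} \] A partial $k$-star design $(V,\mathcal{A})$ of order $n$ is reducible if $n \equiv 1 \pmod{k}$, $|\mathcal{A}|=u(n,k)$, and there is a vertex which is the centre of at least one star in $\mathcal{A}$ and is not a leaf of any star in $\mathcal{A}$; otherwise it is non-reducible. *)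

theory Defs
  imports Complex_Main
begin

text \<open>A k-star is represented by the pair (centre, set of leaves).\<close>
type_synonym 'a star = "'a \<times> 'a set"

definition star_edges :: "'a star \<Rightarrow> 'a set set" where
  "star_edges S = (\<lambda>l. {fst S, l}) ` snd S"

definition complete_edges :: "'a set \<Rightarrow> 'a set set" where
  "complete_edges V = {e. e \<subseteq> V \<and> card e = 2}"

definition is_kstar_in :: "nat \<Rightarrow> 'a set \<Rightarrow> 'a star \<Rightarrow> bool" where
  "is_kstar_in k V S \<longleftrightarrow> fst S \<in> V \<and> snd S \<subseteq> V - {fst S} \<and> card (snd S) = k"

definition edge_disjoint :: "'a star set \<Rightarrow> bool" where
  "edge_disjoint A \<longleftrightarrow>
     (\<forall>S\<in>A. \<forall>T\<in>A. S \<noteq> T \<longrightarrow> star_edges S \<inter> star_edges T = {})"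

definition partial_star_design :: "nat \<Rightarrow> nat \<Rightarrow> 'a set \<Rightarrow> 'a star set \<Rightarrow> bool" where
  "partial_star_design k n V A \<longleftrightarrow> finite V \<and> card V = n \<and>
     (\<forall>S\<in>A. is_kstar_in k V S) \<and> edge_disjoint A"

definition completable :: "nat \<Rightarrow> 'a set \<Rightarrow> 'a star set \<Rightarrow> bool" where
  "completable k V A \<longleftrightarrow> (\<exists>B. A \<subseteq> B \<and> (\<forall>S\<in>B. is_kstar_in k V S) \<and> edge_disjoint B
      \<and> (\<Union>S\<in>B. star_edges S) = complete_edges V)"

definition k_admissible :: "nat \<Rightarrow> nat \<Rightarrow> bool" where
  "k_admissible k n \<longleftrightarrow> (n choose 2) mod k = 0"

definition u_bound :: "nat \<Rightarrow> nat \<Rightarrow> int" where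
  "u_bound n k = (if n mod k \<noteq> 1 mod k
      then 2 * \<lfloor>(real n - 2) / real k\<rfloor> - 1
      else 2 * (int n - 1) div int k - 2)"

definition reducible :: "nat \<Rightarrow> nat \<Rightarrow> 'a star set \<Rightarrow> bool" where
  "reducible k n A \<longleftrightarrow> n mod k = 1 mod k \<and> int (card A) = u_bound n k \<and>
     (\<exists>v. (\<exists>S\<in>A. fst S = v) \<and> (\<forall>S\<in>A. v \<notin> snd S))"

end

theory Submission
  imports Defs
begin

(* For n = 2k there is a single star, and K_2k decomposes into 2k - 1 cyclic stars: on the
   residues modulo 2k - 1 together with a point at infinity, star i has centre i and leaves
   i + 1, ..., i + k - 1 and infinity.  An edge {a, b} between residues lies in exactly one of
   them, because the cyclic offsets b - a and a - b add up to 2k - 1, so exactly one is less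
   than k.  Any two k-stars on vertex sets of the same size differ by a relabelling, which carries
   cyclic star 0 onto the given star and the cyclic decomposition onto a completion. *)

definition star_decomposition :: "nat \<Rightarrow> 'a set \<Rightarrow> 'a star set \<Rightarrow> bool" where
  "star_decomposition k V B \<longleftrightarrow> (\<forall>S\<in>B. is_kstar_in k V S) \<and> edge_disjoint B
     \<and> (\<Union>S\<in>B. star_edges S) = complete_edges V"

lemma completable_iff_star_decomposition:
  "completable k V A \<longleftrightarrow> (\<exists>B. A \<subseteq> B \<and> star_decomposition k V B)"
  unfolding completable_def star_decomposition_def by blast

lemma star_edges_subset_complete_edges:
  assumes "is_kstar_in k V S"
  shows "star_edges S \<subseteq> complete_edges V"
  using assms by (auto simp: star_edges_def is_kstar_in_def complete_edges_def card_insert_if)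

definition map_star :: "('a \<Rightarrow> 'b) \<Rightarrow> 'a star \<Rightarrow> 'b star" where
  "map_star g S = (g (fst S), g ` snd S)"

lemma star_edges_map_star: "star_edges (map_star g S) = image g ` star_edges S"
  unfolding star_edges_def map_star_def by (simp add: image_image)

lemma is_kstar_in_map_star:
  assumes "bij_betw g U V" "is_kstar_in k U S"
  shows "is_kstar_in k V (map_star g S)"
proof -
  have inj: "inj_on g U" and img: "g ` U = V"
    using assms(1) by (auto simp: bij_betw_def)
  have S: "fst S \<in> U" "snd S \<subseteq> U" "fst S \<notin> snd S" "card (snd S) = k"
    using assms(2) by (auto simp: is_kstar_in_def)
  have "g (fst S) \<notin> g ` snd S"
    using inj_on_image_mem_iff[OF inj] S by blast
  then have "g ` snd S \<subseteq> V - {g (fst S)}"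
    using S img by blast
  moreover have "card (g ` snd S) = k"
    using S inj by (simp add: card_image inj_on_subset)
  ultimately show ?thesis
    using S img by (auto simp: is_kstar_in_def map_star_def)
qed

lemma complete_edges_bij_image:
  assumes "bij_betw g U V"
  shows "image g ` complete_edges U = complete_edges V"
proof
  have inj: "inj_on g U" and img: "g ` U = V"
    using assms by (auto simp: bij_betw_def)
  have card_eq: "card (g ` e) = card e" if "e \<subseteq> U" for e
    using inj that by (simp add: card_image inj_on_subset)
  show "image g ` complete_edges U \<subseteq> complete_edges V"
    using img card_eq by (auto simp: complete_edges_def)
  show "complete_edges V \<subseteq> image g ` complete_edges U"
  proof
    fix e assume "e \<in> complete_edges V"
    then obtain e' where "e' \<subseteq> U" "e = g ` e'"
      using img by (auto simp: complete_edges_def subset_image_iff)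
    then show "e \<in> image g ` complete_edges U"
      using \<open>e \<in> complete_edges V\<close> card_eq by (auto simp: complete_edges_def)
  qed
qed

lemma star_decomposition_map_star:
  assumes "bij_betw g U V" "star_decomposition k U B"
  shows "star_decomposition k V (map_star g ` B)"
proof -
  have kstars: "\<forall>S\<in>B. is_kstar_in k U S" and disj: "edge_disjoint B"
    and cover: "(\<Union>S\<in>B. star_edges S) = complete_edges U"
    using assms(2) by (auto simp: star_decomposition_def)
  have inj: "inj_on (image g) (Pow U)"
    using assms(1) by (simp add: bij_betw_def inj_on_image_Pow)
  have edges_Pow: "star_edges S \<subseteq> Pow U" if "S \<in> B" for S
    using star_edges_subset_complete_edges kstars that by (fastforce simp: complete_edges_def)
  have "edge_disjoint (map_star g ` B)"
    unfolding edge_disjoint_def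
  proof (intro ballI impI)
    fix S' T' assume "S' \<in> map_star g ` B" "T' \<in> map_star g ` B" "S' \<noteq> T'"
    then obtain S T where "S \<in> B" "T \<in> B" "S \<noteq> T" "S' = map_star g S" "T' = map_star g T"
      by auto
    then have "star_edges S' \<inter> star_edges T' = image g ` (star_edges S \<inter> star_edges T)"
      using inj_on_image_Int[OF inj] edges_Pow by (simp add: star_edges_map_star)
    also have "\<dots> = {}"
      using disj \<open>S \<in> B\<close> \<open>T \<in> B\<close> \<open>S \<noteq> T\<close> by (simp add: edge_disjoint_def)
    finally show "star_edges S' \<inter> star_edges T' = {}" .
  qed
  moreover have "(\<Union>S\<in>map_star g ` B. star_edges S) = image g ` (\<Union>S\<in>B. star_edges S)"
    by (simp add: star_edges_map_star image_UN)
  then have "(\<Union>S\<in>map_star g ` B. star_edges S) = complete_edges V"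
    using cover complete_edges_bij_image[OF assms(1)] by simp
  ultimately show ?thesis
    using assms(1) kstars by (simp add: star_decomposition_def is_kstar_in_map_star)
qed

(* Vertices 0, ..., m - 1 are the residues modulo m; vertex m plays the role of infinity. *)
definition cyclic_star :: "nat \<Rightarrow> nat \<Rightarrow> nat \<Rightarrow> nat star" where
  "cyclic_star m k i = (i, insert m ((\<lambda>j. (i + j) mod m) ` {1..<k}))"

lemma cyclic_offset_eq:
  fixes a b m :: nat
  assumes "a < m" "b < m"
  shows "(b + m - a) mod m = (if a \<le> b then b - a else b + m - a)"
  using assms by (auto simp: mod_if)

lemma cyclic_offsets_sum:
  fixes a b m :: nat
  assumes "a < m" "b < m" "a \<noteq> b"
  shows "(b + m - a) mod m + (a + m - b) mod m = m"
  using assms by (simp add: cyclic_offset_eq)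

lemma mem_cyclic_star_leaves:
  assumes "k \<le> m" "i < m" "x < m"
  shows "x \<in> snd (cyclic_star m k i) \<longleftrightarrow> (x + m - i) mod m \<in> {1..<k}"
proof
  assume "x \<in> snd (cyclic_star m k i)"
  then obtain j where "j \<in> {1..<k}" "x = (i + j) mod m"
    using assms by (auto simp: cyclic_star_def)
  then show "(x + m - i) mod m \<in> {1..<k}"
    using assms by (auto simp: mod_if)
next
  assume "(x + m - i) mod m \<in> {1..<k}"
  then have "x = (i + (x + m - i) mod m) mod m"
    using assms by (auto simp: mod_if)
  then show "x \<in> snd (cyclic_star m k i)"
    using \<open>(x + m - i) mod m \<in> {1..<k}\<close> unfolding cyclic_star_def by auto
qed

lemma cyclic_star_is_kstar:
  assumes "0 < k" "k \<le> m" "i < m"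
  shows "is_kstar_in k {0..m} (cyclic_star m k i)"
proof -
  let ?R = "(\<lambda>j. (i + j) mod m) ` {1..<k}"
  have "inj_on (\<lambda>j. (i + j) mod m) {1..<k}"
    using assms by (auto simp: inj_on_def mod_if)
  then have "card ?R = k - 1"
    by (simp add: card_image)
  moreover have "m \<notin> ?R" "?R \<subseteq> {0..m} - {i}"
    using assms by (auto simp: mod_if)
  ultimately show ?thesis
    using assms by (simp add: is_kstar_in_def cyclic_star_def)
qed

lemma edge_in_cyclic_star:
  assumes "0 < k" "m = 2*k - 1" "a < b" "b \<le> m"
  shows "\<exists>i<m. {a, b} \<in> star_edges (cyclic_star m k i)"
proof (cases "b = m")
  case True
  then show ?thesis
    using assms by (auto simp: star_edges_def cyclic_star_def)
next
  case False
  then have "a < m" "b < m" using assms by auto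
  show ?thesis
  proof (cases "b - a < k")
    case True
    have "(b + m - a) mod m = b - a"
      using cyclic_offset_eq \<open>a < m\<close> \<open>b < m\<close> \<open>a < b\<close> by simp
    then have "b \<in> snd (cyclic_star m k a)"
      using True assms \<open>a < m\<close> \<open>b < m\<close> by (simp add: mem_cyclic_star_leaves)
    then show ?thesis
      using \<open>a < m\<close> by (auto simp: star_edges_def cyclic_star_def)
  next
    case False
    have "(a + m - b) mod m = a + m - b"
      using cyclic_offset_eq \<open>a < m\<close> \<open>b < m\<close> \<open>a < b\<close> by simp
    moreover have "a + m - b \<in> {1..<k}"
      using False assms \<open>b < m\<close> by auto
    ultimately have "a \<in> snd (cyclic_star m k b)"
      using assms \<open>a < m\<close> \<open>b < m\<close> by (simp add: mem_cyclic_star_leaves)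
    then show ?thesis
      using \<open>b < m\<close> by (auto simp: star_edges_def cyclic_star_def insert_commute)
  qed
qed

lemma cyclic_stars_edge_disjoint:
  assumes "0 < k" "m = 2*k - 1"
  shows "edge_disjoint (cyclic_star m k ` {..<m})"
  unfolding edge_disjoint_def
proof (intro ballI impI)
  fix S T
  assume "S \<in> cyclic_star m k ` {..<m}" "T \<in> cyclic_star m k ` {..<m}" "S \<noteq> T"
  then obtain i j where ij: "i < m" "j < m" "i \<noteq> j" "S = cyclic_star m k i" "T = cyclic_star m k j"
    by auto
  show "star_edges S \<inter> star_edges T = {}"
  proof (rule ccontr)
    assume "star_edges S \<inter> star_edges T \<noteq> {}"
    then have "j \<in> snd S" "i \<in> snd T"
      using ij by (auto simp: star_edges_def cyclic_star_def doubleton_eq_iff)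
    then have "(j + m - i) mod m \<in> {1..<k}" "(i + m - j) mod m \<in> {1..<k}"
      using ij assms by (simp_all add: mem_cyclic_star_leaves)
    moreover have "(j + m - i) mod m + (i + m - j) mod m = m"
      using ij by (simp add: cyclic_offsets_sum)
    ultimately show False
      using assms(2) by (simp only: atLeastLessThan_iff) linarith
  qed
qed

lemma cyclic_star_decomposition:
  assumes "0 < k" "m = 2*k - 1"
  shows "star_decomposition k {0..m} (cyclic_star m k ` {..<m})"
proof -
  have kstars: "\<forall>S\<in>cyclic_star m k ` {..<m}. is_kstar_in k {0..m} S"
    using assms by (auto intro: cyclic_star_is_kstar)
  have "complete_edges {0..m} \<subseteq> (\<Union>S\<in>cyclic_star m k ` {..<m}. star_edges S)"
  proof
    fix e assume "e \<in> complete_edges {0..m}"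
    then obtain x y where "e = {x, y}" "x \<noteq> y" "x \<le> m" "y \<le> m"
      by (auto simp: complete_edges_def card_2_iff)
    then obtain a b where "e = {a, b}" "a < b" "b \<le> m"
      by (metis insert_commute linorder_neqE_nat)
    then obtain i where "i < m" "e \<in> star_edges (cyclic_star m k i)"
      using edge_in_cyclic_star[OF assms] by metis
    then show "e \<in> (\<Union>S\<in>cyclic_star m k ` {..<m}. star_edges S)"
      by blast
  qed
  moreover have "(\<Union>S\<in>cyclic_star m k ` {..<m}. star_edges S) \<subseteq> complete_edges {0..m}"
    using kstars star_edges_subset_complete_edges by blast
  ultimately show ?thesis
    using kstars cyclic_stars_edge_disjoint[OF assms] by (auto simp: star_decomposition_def)
qed

lemma ex_bij_betw_image_subset:
  assumes "finite A" "finite B" "card A = card B" "P \<subseteq> A" "Q \<subseteq> B" "card P = card Q"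
  obtains g where "bij_betw g A B" "g ` P = Q"
proof -
  have fin: "finite P" "finite Q"
    using assms finite_subset by blast+
  obtain h1 where h1: "bij_betw h1 P Q"
    using finite_same_card_bij fin assms(6) by blast
  have "card (A - P) = card (B - Q)"
    using assms fin by (simp add: card_Diff_subset)
  then obtain h2 where h2: "bij_betw h2 (A - P) (B - Q)"
    using finite_same_card_bij assms(1,2) by blast
  let ?g = "\<lambda>x. if x \<in> P then h1 x else h2 x"
  have "bij_betw ?g (P \<union> (A - P)) (Q \<union> (B - Q))"
    using bij_betw_disjoint_Un[OF h1 h2] by blast
  then have "bij_betw ?g A B"
    using assms(4,5) by (simp add: Un_absorb1)
  moreover have "?g ` P = Q"
    using h1 by (simp add: bij_betw_def)
  ultimately show ?thesis
    using that by blast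
qed

lemma ex_bij_betw_map_star:
  assumes "finite U" "finite V" "card U = card V" "is_kstar_in k U S" "is_kstar_in k V T"
  obtains g where "bij_betw g U V" "map_star g S = T"
proof -
  obtain c L d M where ST: "S = (c, L)" "T = (d, M)"
    by fastforce
  have c: "c \<in> U" "L \<subseteq> U - {c}" "card L = k" and d: "d \<in> V" "M \<subseteq> V - {d}" "card M = k"
    using assms(4,5) ST by (auto simp: is_kstar_in_def)
  have "card (U - {c}) = card (V - {d})"
    using assms(1-3) c d by simp
  then obtain g where g: "bij_betw g (U - {c}) (V - {d})" "g ` L = M"
    using ex_bij_betw_image_subset[of "U - {c}" "V - {d}" L M] assms(1,2) c d by auto
  let ?g = "g(c := d)"
  have "bij_betw ?g (U - {c}) (V - {d})"
    using g(1) by (rule bij_betw_cong[THEN iffD1, rotated]) simp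
  moreover have "bij_betw ?g {c} {d}"
    by (simp add: bij_betw_def)
  ultimately have "bij_betw ?g ((U - {c}) \<union> {c}) ((V - {d}) \<union> {d})"
    by (rule bij_betw_combine) simp
  then have "bij_betw ?g U V"
    using c d by (simp add: insert_absorb)
  moreover have "map_star ?g S = T"
    using g(2) c ST by (auto simp: map_star_def)
  ultimately show ?thesis
    using that by blast
qed

lemma single_star_completable:
  assumes "0 < k" "finite V" "card V = 2*k" "is_kstar_in k V S"
  shows "completable k V {S}"
proof -
  define m where "m = 2*k - 1"
  have "is_kstar_in k {0..m} (cyclic_star m k 0)"
    using assms(1) by (simp add: m_def cyclic_star_is_kstar)
  moreover have "card {0..m} = card V"
    using assms(1,3) by (simp add: m_def)
  ultimately obtain g where g: "bij_betw g {0..m} V" "map_star g (cyclic_star m k 0) = S"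
    using ex_bij_betw_map_star assms(2,4) by (metis finite_atLeastAtMost)
  let ?B = "map_star g ` cyclic_star m k ` {..<m}"
  have "0 < m"
    using assms(1) by (simp add: m_def)
  then have "S \<in> ?B"
    using g(2) by blast
  moreover have "star_decomposition k V ?B"
    using star_decomposition_map_star[OF g(1) cyclic_star_decomposition[OF assms(1) m_def]] .
  ultimately show ?thesis
    unfolding completable_iff_star_decomposition by (intro exI[of _ ?B]) simp
qed

lemma edge_disjoint_pair_has_free_centre:
  assumes "card A = 2" "\<forall>S\<in>A. fst S \<notin> snd S" "edge_disjoint A"
  shows "\<exists>v. (\<exists>S\<in>A. fst S = v) \<and> (\<forall>S\<in>A. v \<notin> snd S)"
proof (rule ccontr)
  assume no_free: "\<not> ?thesis"
  obtain S T where A: "A = {S, T}" "S \<noteq> T"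
    using assms(1) by (auto simp: card_2_iff)
  have "fst S \<in> snd T" "fst T \<in> snd S"
    using no_free assms(2) A by auto
  then have "{fst S, fst T} \<in> star_edges S \<inter> star_edges T"
    by (auto simp: star_edges_def insert_commute)
  then show False
    using assms(3) A by (auto simp: edge_disjoint_def)
qed

lemma u_bound_double:
  assumes "2 \<le> k"
  shows "u_bound (2*k) k = 1"
proof -
  have "\<lfloor>(real (2*k) - 2) / real k\<rfloor> = 1"
    using assms by (intro floor_unique) (simp_all add: field_simps)
  then show ?thesis
    using assms by (simp add: u_bound_def)
qed

lemma Suc_double_mod: "Suc (2*k) mod k = 1 mod k"
  by (metis mod_mult_self2 mult.commute plus_1_eq_Suc)

lemma u_bound_double_Suc:
  assumes "0 < k"
  shows "u_bound (2*k + 1) k = 2"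
  using assms by (simp add: u_bound_def Suc_double_mod)

theorem lemma9:
  fixes k n :: nat and V :: "'a set" and A :: "'a star set"
  assumes "k \<ge> 3"
    and "k_admissible k n"
    and "n \<in> {2*k, 2*k+1}"
    and "partial_star_design k n V A"
    and "\<not> reducible k n A"
    and "int (card A) = u_bound n k"
  shows "completable k V A"
proof -
  have V: "finite V" "card V = n" and stars: "\<forall>S\<in>A. is_kstar_in k V S"
    and disj: "edge_disjoint A"
    using assms(4) by (auto simp: partial_star_design_def)
  consider "n = 2*k" | "n = 2*k + 1"
    using assms(3) by auto
  then show ?thesis
  proof cases
    case 1
    then obtain S where "A = {S}"
      using assms(1,6) u_bound_double by (auto simp: card_1_singleton_iff)
    then show ?thesis
      using single_star_completable[of k V S] assms(1) V stars 1 by simp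
  next
    case 2
    have "card A = 2" "\<forall>S\<in>A. fst S \<notin> snd S"
      using 2 assms(1,6) u_bound_double_Suc stars by (auto simp: is_kstar_in_def)
    then have "reducible k n A"
      using edge_disjoint_pair_has_free_centre[OF _ _ disj] assms(6) 2
      by (simp add: reducible_def Suc_double_mod)
    then show ?thesis
      using assms(5) by contradiction
  qed
qed

end
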